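(* Let $m\geq 2$ be an integer and let $\delta$ be a real number with $0\leq\delta\leq \frac{1}{4m}\left(1-\frac{2}{2^m-1}\right)$. Then there exists a sequence of binary $[[n_i,k_i,d_i]]$ stabilizer codes such that $\lim_{i\to\infty}n_i=\infty$, $$\liminf_{i\to\infty}\frac{k_i}{n_i}\geq R_m^{(1)}(\delta):=1-\frac{2}{2^m-1}-4m\delta,\qquad \liminf_{i\to\infty}\frac{d_i}{n_i}\geq\delta.$$
   Context: A binary $[[n,k,d]]$ stabilizer code is given by an $(n+k)$-dimensional subspace $C\subseteq\mathbf{F}_2^{2n}$ with $C^{\perp\mathrm s}\subseteq C$, where $\langle\vec x,\vec y\rangle_{\mathrm s}=\sum_{i=1}^n x_iy_{n+i}-\sum_{i=1}^n x_{n+i}y_i$ and $C^{\perp\mathrm s}$ is the orthogonal complement of $C$ with respect to this form; its minimum distance $d$ is $\min\{w(\vec x)\mid \vec x\in C\setminus C^{\perp\mathrm s}\}$ with $w(\vec x)=\#\{1\le i\le n\mid (x_i,x_{n+i})\neq(0,0)\}$. *)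

theory Defs
  imports "HOL-Analysis.Analysis" "HOL-Library.Z2" "HOL-Library.Function_Algebras"
begin

(* Vectors of F_2^{2n} are represented as functions nat => bit vanishing at indices >= 2n;
   index i < n is the coordinate x_{i+1}, index n+i is x_{n+i+1}. *)
type_synonym f2vec = "nat \<Rightarrow> bit"

definition f2space :: "nat \<Rightarrow> f2vec set" where
  "f2space N = {x. \<forall>i\<ge>N. x i = 0}"

definition f2scale :: "bit \<Rightarrow> f2vec \<Rightarrow> f2vec" where
  "f2scale c x = (\<lambda>i. c * x i)"

definition symp_form :: "nat \<Rightarrow> f2vec \<Rightarrow> f2vec \<Rightarrow> bit" where
  "symp_form n x y = (\<Sum>i<n. x i * y (n + i)) - (\<Sum>i<n. x (n + i) * y i)"

definition symp_perp :: "nat \<Rightarrow> f2vec set \<Rightarrow> f2vec set" where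
  "symp_perp n C = {y \<in> f2space (2 * n). \<forall>x\<in>C. symp_form n x y = 0}"

definition symp_weight :: "nat \<Rightarrow> f2vec \<Rightarrow> nat" where
  "symp_weight n x = card {i. i < n \<and> (x i, x (n + i)) \<noteq> (0, 0)}"

definition is_stabilizer_code :: "nat \<Rightarrow> nat \<Rightarrow> f2vec set \<Rightarrow> bool" where
  "is_stabilizer_code n k C \<longleftrightarrow>
     C \<subseteq> f2space (2 * n) \<and> module.subspace f2scale C \<and>
     vector_space.dim f2scale C = n + k \<and> symp_perp n C \<subseteq> C"

(* minimum distance: min weight over C \ C^{perp_s}; (Inf of the empty set of nat is 0) *)
definition stab_distance :: "nat \<Rightarrow> f2vec set \<Rightarrow> nat" where
  "stab_distance n C = Inf (symp_weight n ` (C - symp_perp n C))"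

definition is_stabilizer_code_nkd :: "nat \<Rightarrow> nat \<Rightarrow> nat \<Rightarrow> f2vec set \<Rightarrow> bool" where
  "is_stabilizer_code_nkd n k d C \<longleftrightarrow> is_stabilizer_code n k C \<and> d = stab_distance n C"

end

theory Submission
  imports Defs
begin

(* A Gilbert-Varshamov argument for CSS codes, which already gives more than the stated rate.
   Take a random generator in systematic form: rows e_j + g_j for j < r, with g_j supported on
   the coordinates r..<n, and rows g_j for r <= j < a.  Let A be the row space and B the set of
   vectors orthogonal to the first r rows; then B^perp <= A and A^perp <= B, so A x B is a
   stabilizer code with k = a - r, and its distance is at least the minimum weight of A and B.
   As g varies, the codeword of a fixed nonzero message, and the element of B extending a fixed
   nonzero y supported on r..<n, are uniformly distributed on a coset of a coordinate subspace.
   So a union bound over Hamming balls shows that some g gives minimum weight >= d as soon as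
   3 V(n,d) < 2^l, where r = l and a = n - l.  With V(n,d) <= (e n / d)^d and
   t (1 - ln t) <= 2 m ln 2 t + 4^-m this gives rate 1 - 2/(2^m - 1) - 4 m delta at relative
   distance delta. *)

declare add_bit_eq_xor[simp del] mult_bit_eq_and[simp del]

lemma bit_add_self [simp]: "(x::bit) + x = 0"
  by (cases x) auto

lemma bit_add_eq_0_iff: "(x::bit) + y = 0 \<longleftrightarrow> x = y"
  by (cases x; cases y) auto

lemma f2vec_add_self [simp]: "(x::f2vec) + x = 0"
  by (simp add: fun_eq_iff)

lemma f2vec_add_cancel_left [simp]: "(x::f2vec) + (x + y) = y"
  by (simp add: add.assoc[symmetric])

lemma f2vec_diff_eq_add: "(x::f2vec) - y = x + y"
  by (simp add: fun_eq_iff)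

interpretation f2: vector_space f2scale
  by unfold_locales (auto simp: f2scale_def algebra_simps fun_eq_iff)

lemma f2scale_eq_if: "f2scale c x = (if c = 0 then 0 else x)"
  by (auto simp: f2scale_def fun_eq_iff)

lemma f2_span_insert: "f2.span (insert b B) = f2.span B \<union> (+) b ` f2.span B"
proof (rule set_eqI)
  fix x
  have "x \<in> f2.span (insert b B) \<longleftrightarrow> (\<exists>c. x - f2scale c b \<in> f2.span B)"
    by (simp add: f2.span_insert)
  also have "\<dots> \<longleftrightarrow> x - f2scale 0 b \<in> f2.span B \<or> x - f2scale 1 b \<in> f2.span B"
    by (metis bit_not_zero_iff)
  also have "\<dots> \<longleftrightarrow> x \<in> f2.span B \<or> b + x \<in> f2.span B"
    by (simp add: f2vec_diff_eq_add add.commute)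
  also have "\<dots> \<longleftrightarrow> x \<in> f2.span B \<union> (+) b ` f2.span B"
    by (metis Un_iff f2vec_add_cancel_left image_iff)
  finally show "x \<in> f2.span (insert b B) \<longleftrightarrow> x \<in> f2.span B \<union> (+) b ` f2.span B" .
qed

lemma f2_card_span_independent:
  assumes "finite B" "f2.independent B"
  shows "card (f2.span B) = 2 ^ card B"
  using assms
proof (induction B rule: finite_induct)
  case empty
  then show ?case by simp
next
  case (insert b B)
  then have IH: "card (f2.span B) = 2 ^ card B" and b: "b \<notin> f2.span B"
    by (auto simp: f2.independent_insert)
  then have fin: "finite (f2.span B)"
    by (metis card.infinite power_not_zero zero_neq_numeral)
  have "f2.span B \<inter> (+) b ` f2.span B = {}"
    using b f2.span_add by (force simp: add.commute)
  then have "card (f2.span (insert b B)) = card (f2.span B) + card ((+) b ` f2.span B)"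
    by (simp add: f2_span_insert card_Un_disjoint fin)
  also have "\<dots> = 2 * card (f2.span B)"
    by (simp add: card_image)
  finally show ?case
    using IH insert by simp
qed

lemma f2_card_subspace:
  assumes "finite S" "f2.subspace S"
  shows "card S = 2 ^ f2.dim S"
proof -
  obtain B where B: "B \<subseteq> S" "f2.independent B" "S \<subseteq> f2.span B" "card B = f2.dim S"
    by (rule f2.basis_exists)
  then have "f2.span B = S"
    using assms f2.span_subspace by blast
  with B assms show ?thesis
    by (metis f2_card_span_independent finite_subset)
qed

definition f2vecs_on :: "nat set \<Rightarrow> f2vec set" where
  "f2vecs_on S = {x. \<forall>i. i \<notin> S \<longrightarrow> x i = 0}"

definition f2restrict :: "nat set \<Rightarrow> f2vec \<Rightarrow> f2vec" where
  "f2restrict S x = (\<lambda>i. if i \<in> S then x i else 0)"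

lemma f2space_eq_f2vecs_on: "f2space n = f2vecs_on {..<n}"
  by (auto simp: f2space_def f2vecs_on_def)

lemma add_mem_f2vecs_on: "x \<in> f2vecs_on S \<Longrightarrow> y \<in> f2vecs_on S \<Longrightarrow> x + y \<in> f2vecs_on S"
  by (auto simp: f2vecs_on_def)

lemma zero_mem_f2vecs_on [simp]: "0 \<in> f2vecs_on S"
  by (auto simp: f2vecs_on_def)

lemma f2restrict_mem_f2vecs_on [simp]: "f2restrict S x \<in> f2vecs_on S"
  by (auto simp: f2restrict_def f2vecs_on_def)

lemma f2restrict_id: "x \<in> f2vecs_on S \<Longrightarrow> f2restrict S x = x"
  by (auto simp: f2restrict_def f2vecs_on_def)

lemma card_f2vecs_on:
  assumes "finite S"
  shows "card (f2vecs_on S) = 2 ^ card S"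
proof -
  have "bij_betw (\<lambda>x. {i\<in>S. x i = 1}) (f2vecs_on S) (Pow S)"
    by (rule bij_betw_byWitness[where f'="\<lambda>A i. if i \<in> A then 1 else 0"])
      (auto simp: f2vecs_on_def fun_eq_iff)
  then show ?thesis
    using assms by (metis bij_betw_same_card card_Pow)
qed

lemma finite_f2vecs_on: "finite S \<Longrightarrow> finite (f2vecs_on S)"
  by (metis card_f2vecs_on card.infinite power_not_zero zero_neq_numeral)

lemma f2vecs_on_nonzeroE:
  assumes "x \<in> f2vecs_on S" "x \<noteq> 0"
  obtains i where "i \<in> S" "x i = 1"
proof -
  have "\<exists>i. x i = 1"
    using assms(2) by (auto simp: fun_eq_iff)
  then obtain i where "x i = 1" ..
  moreover have "i \<in> S"
    using assms(1) calculation by (auto simp: f2vecs_on_def intro: ccontr)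
  ultimately show thesis
    using that by blast
qed

lemma add_mem_f2space: "x \<in> f2space n \<Longrightarrow> y \<in> f2space n \<Longrightarrow> x + y \<in> f2space n"
  by (simp add: f2space_eq_f2vecs_on add_mem_f2vecs_on)

lemma zero_mem_f2space [simp]: "0 \<in> f2space n"
  by (simp add: f2space_eq_f2vecs_on)

lemma finite_f2space: "finite (f2space n)"
  by (simp add: f2space_eq_f2vecs_on finite_f2vecs_on)

lemma card_f2space: "card (f2space n) = 2 ^ n"
  by (simp add: f2space_eq_f2vecs_on card_f2vecs_on)

lemma bij_betw_add_f2vecs_on:
  assumes "I \<inter> J = {}"
  shows "bij_betw (\<lambda>(x, y). x + y) (f2vecs_on I \<times> f2vecs_on J) (f2vecs_on (I \<union> J))"
proof (rule bij_betw_byWitness[where f'="\<lambda>v. (f2restrict I v, f2restrict J v)"])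
  show "\<forall>p\<in>f2vecs_on I \<times> f2vecs_on J. (f2restrict I (case p of (x, y) \<Rightarrow> x + y),
      f2restrict J (case p of (x, y) \<Rightarrow> x + y)) = p"
    using assms by (fastforce simp: f2restrict_def f2vecs_on_def fun_eq_iff)
  show "\<forall>v\<in>f2vecs_on (I \<union> J). (case (f2restrict I v, f2restrict J v) of (x, y) \<Rightarrow> x + y) = v"
    using assms by (auto simp: f2restrict_def f2vecs_on_def fun_eq_iff)
qed (auto simp: f2vecs_on_def f2restrict_def)

lemma sum_card_translates_f2vecs_on:
  assumes "I \<inter> J = {}" "finite I" "finite J"
  shows "(\<Sum>x\<in>f2vecs_on I. card {y \<in> f2vecs_on J. P (x + y)}) = card {v \<in> f2vecs_on (I \<union> J). P v}"
proof -
  have "(\<Sum>x\<in>f2vecs_on I. card {y \<in> f2vecs_on J. P (x + y)})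
      = card (SIGMA x:f2vecs_on I. {y \<in> f2vecs_on J. P (x + y)})"
    using assms by (simp add: card_SigmaI finite_f2vecs_on)
  also have "(SIGMA x:f2vecs_on I. {y \<in> f2vecs_on J. P (x + y)})
      = {p \<in> f2vecs_on I \<times> f2vecs_on J. P (case p of (x, y) \<Rightarrow> x + y)}"
    by auto
  also have "card \<dots> = card {v \<in> f2vecs_on (I \<union> J). P v}"
    by (rule bij_betw_same_card, rule bij_betw_Collect[OF bij_betw_add_f2vecs_on[OF assms(1)]]) simp
  finally show ?thesis .
qed

definition hamming_weight :: "nat \<Rightarrow> f2vec \<Rightarrow> nat" where
  "hamming_weight n x = card {i. i < n \<and> x i \<noteq> 0}"

definition hamming_ball_card :: "nat \<Rightarrow> nat \<Rightarrow> nat" where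
  "hamming_ball_card n d = card {x \<in> f2space n. hamming_weight n x < d}"

lemma hamming_weight_0 [simp]: "hamming_weight n 0 = 0"
  by (simp add: hamming_weight_def)

lemma card_hamming_sphere: "card {x \<in> f2space n. hamming_weight n x = w} = n choose w"
proof -
  have "bij_betw (\<lambda>x. {i. i < n \<and> x i \<noteq> 0}) {x \<in> f2space n. hamming_weight n x = w}
      {A. A \<subseteq> {..<n} \<and> card A = w}"
  proof (rule bij_betw_byWitness[where f'="\<lambda>A i. if i \<in> A then 1 else 0"])
    show "(\<lambda>A i. if i \<in> A then 1 else 0) ` {A. A \<subseteq> {..<n} \<and> card A = w}
        \<subseteq> {x \<in> f2space n. hamming_weight n x = w}"
    proof safe
      fix A :: "nat set" assume "A \<subseteq> {..<n}"
      then have "{i. i < n \<and> (if i \<in> A then 1 else 0) \<noteq> (0::bit)} = A"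
        by auto
      with \<open>A \<subseteq> {..<n}\<close> show "(\<lambda>i. if i \<in> A then 1 else 0) \<in> f2space n"
        and "hamming_weight n (\<lambda>i. if i \<in> A then 1 else 0) = card A"
        by (auto simp: f2space_def hamming_weight_def)
    qed
  qed (auto simp: f2space_def hamming_weight_def fun_eq_iff)
  then show ?thesis
    using bij_betw_same_card n_subsets[of "{..<n}" w] by fastforce
qed

lemma hamming_ball_card_eq_sum: "hamming_ball_card n d = (\<Sum>w<d. n choose w)"
proof -
  have "{x \<in> f2space n. hamming_weight n x < d}
      = (\<Union>w<d. {x \<in> f2space n. hamming_weight n x = w})"
    by auto
  then have "hamming_ball_card n d = (\<Sum>w<d. card {x \<in> f2space n. hamming_weight n x = w})"
    unfolding hamming_ball_card_def
    by (simp, intro card_UN_disjoint) (auto simp: finite_f2space)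
  then show ?thesis
    by (simp add: card_hamming_sphere)
qed

lemma sum_card_light_translates_le:
  assumes "I \<inter> J = {}" "I \<union> J = {..<n}"
  shows "(\<Sum>x\<in>f2vecs_on I - {0}. card {t \<in> f2vecs_on J. hamming_weight n (x + t) < d})
    \<le> hamming_ball_card n d"
proof -
  have fin: "finite I" "finite J"
    using finite_lessThan[of n] unfolding assms(2)[symmetric] by simp_all
  then have "(\<Sum>x\<in>f2vecs_on I - {0}. card {t \<in> f2vecs_on J. hamming_weight n (x + t) < d})
      \<le> (\<Sum>x\<in>f2vecs_on I. card {t \<in> f2vecs_on J. hamming_weight n (x + t) < d})"
    by (intro sum_mono2) (simp_all add: finite_f2vecs_on)
  also have "\<dots> = hamming_ball_card n d"
    unfolding hamming_ball_card_def f2space_eq_f2vecs_on assms(2)[symmetric]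
    using assms(1) fin by (rule sum_card_translates_f2vecs_on)
  finally show ?thesis .
qed

lemma hamming_ball_card_le:
  assumes "1 \<le> d" "d \<le> n"
  shows "real (hamming_ball_card n d) \<le> exp d * (n / d) ^ d"
proof -
  define x where "x = real d / real n"
  have x: "0 < x" "x \<le> 1"
    using assms by (auto simp: x_def)
  have "real (hamming_ball_card n d) = (\<Sum>w<d. real (n choose w))"
    by (simp add: hamming_ball_card_eq_sum)
  also have "\<dots> \<le> (\<Sum>w<d. real (n choose w) * x ^ w / x ^ d)"
  proof (rule sum_mono)
    fix w assume "w \<in> {..<d}"
    then have "x ^ d \<le> x ^ w"
      using x by (intro power_decreasing) auto
    then show "real (n choose w) \<le> real (n choose w) * x ^ w / x ^ d"
      using x by (simp add: le_divide_eq mult_left_mono)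
  qed
  also have "\<dots> \<le> (\<Sum>w\<le>n. real (n choose w) * x ^ w / x ^ d)"
    using assms x by (intro sum_mono2) auto
  also have "\<dots> = (x + 1) ^ n / x ^ d"
    by (simp add: binomial_ring sum_divide_distrib)
  also have "\<dots> \<le> exp x ^ n / x ^ d"
    using x by (intro divide_right_mono power_mono) (auto simp: add.commute exp_ge_add_one_self)
  also have "\<dots> = exp d * (n / d) ^ d"
    using assms by (simp add: x_def exp_of_nat_mult[symmetric] power_divide)
  finally show ?thesis .
qed

lemma card_filter_bij_betw: "bij_betw f A B \<Longrightarrow> card {x \<in> A. P (f x)} = card {y \<in> B. P y}"
  by (rule bij_betw_same_card, erule bij_betw_Collect) simp

lemma bij_betw_involution: "(\<And>x. x \<in> S \<Longrightarrow> f x \<in> S) \<Longrightarrow> (\<And>x. x \<in> S \<Longrightarrow> f (f x) = x) \<Longrightarrow> bij_betw f S S"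
  by (rule bij_betw_byWitness[where f'=f]) auto

lemma card_filter_translate:
  assumes "\<And>x y. x \<in> T \<Longrightarrow> y \<in> T \<Longrightarrow> x + y \<in> T" "(u::f2vec) \<in> T"
  shows "card {t \<in> T. P (u + t)} = card {t \<in> T. P t}"
  using assms by (intro card_filter_bij_betw[where f="(+) u"] bij_betw_involution) simp_all

lemma card_UN_le_weighted:
  fixes c K :: nat
  assumes "finite I" "\<And>i. i \<in> I \<Longrightarrow> c * card (B i) \<le> K * f i"
  shows "c * card (\<Union>i\<in>I. B i) \<le> K * (\<Sum>i\<in>I. f i)"
proof -
  have "c * card (\<Union>i\<in>I. B i) \<le> (\<Sum>i\<in>I. c * card (B i))"
    using card_UN_le[OF assms(1), of B] by (simp add: sum_distrib_left[symmetric])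
  also have "\<dots> \<le> K * (\<Sum>i\<in>I. f i)"
    using assms(2) by (simp add: sum_distrib_left sum_mono)
  finally show ?thesis .
qed

lemma less_of_mult_le:
  fixes T X c V k :: nat
  assumes "T * X \<le> c * V" "k * V < T" "0 < c"
  shows "k * X < c"
proof -
  have "T * (k * X) \<le> c * (k * V)"
    using assms(1) by (simp add: algebra_simps)
  also have "\<dots> < c * T"
    using assms(2,3) by simp
  finally show ?thesis
    by (simp add: mult.commute)
qed

(* If every translation of the values of out by t in T is realised by a permutation of Omega,
   then out is equidistributed on T: double count the pairs (omega, t) with P (out omega + t). *)
lemma card_filter_shift_equivariant:
  fixes out :: "'a \<Rightarrow> f2vec"
  assumes "finite \<Omega>" "finite T"
    and T_add: "\<And>x y. x \<in> T \<Longrightarrow> y \<in> T \<Longrightarrow> x + y \<in> T"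
    and out: "\<And>\<omega>. \<omega> \<in> \<Omega> \<Longrightarrow> out \<omega> \<in> T"
    and shift_bij: "\<And>t. t \<in> T \<Longrightarrow> bij_betw (shift t) \<Omega> \<Omega>"
    and out_shift: "\<And>t \<omega>. t \<in> T \<Longrightarrow> \<omega> \<in> \<Omega> \<Longrightarrow> out (shift t \<omega>) = out \<omega> + t"
  shows "card T * card {\<omega> \<in> \<Omega>. P (out \<omega>)} = card \<Omega> * card {t \<in> T. P t}"
proof -
  have by_shift: "card {\<omega> \<in> \<Omega>. P (out \<omega> + t)} = card {\<omega> \<in> \<Omega>. P (out \<omega>)}" if "t \<in> T" for t
  proof -
    have "card {\<omega> \<in> \<Omega>. P (out \<omega> + t)} = card {\<omega> \<in> \<Omega>. P (out (shift t \<omega>))}"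
      using that out_shift by (metis (no_types, lifting))
    also have "\<dots> = card {\<omega> \<in> \<Omega>. P (out \<omega>)}"
      using shift_bij[OF that] by (rule card_filter_bij_betw)
    finally show ?thesis .
  qed
  have by_translation: "card {t \<in> T. P (out \<omega> + t)} = card {t \<in> T. P t}" if "\<omega> \<in> \<Omega>" for \<omega>
    by (rule card_filter_translate[OF T_add out[OF that]])
  have "card T * card {\<omega> \<in> \<Omega>. P (out \<omega>)} = (\<Sum>t\<in>T. card {\<omega> \<in> \<Omega>. P (out \<omega> + t)})"
    by (simp add: by_shift)
  also have "\<dots> = (\<Sum>t\<in>T. \<Sum>\<omega>\<in>\<Omega>. if P (out \<omega> + t) then 1 else 0)"
    using \<open>finite \<Omega>\<close> by (simp add: sum.inter_filter[symmetric])
  also have "\<dots> = (\<Sum>\<omega>\<in>\<Omega>. \<Sum>t\<in>T. if P (out \<omega> + t) then 1 else 0)"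
    by (rule sum.swap)
  also have "\<dots> = (\<Sum>\<omega>\<in>\<Omega>. card {t \<in> T. P (out \<omega> + t)})"
    using \<open>finite T\<close> by (simp add: sum.inter_filter[symmetric])
  also have "\<dots> = card \<Omega> * card {t \<in> T. P t}"
    by (simp add: by_translation)
  finally show ?thesis .
qed

definition f2dot :: "nat \<Rightarrow> f2vec \<Rightarrow> f2vec \<Rightarrow> bit" where
  "f2dot n x y = (\<Sum>i<n. x i * y i)"

definition f2perp :: "nat \<Rightarrow> f2vec set \<Rightarrow> f2vec set" where
  "f2perp n S = {y \<in> f2space n. \<forall>x\<in>S. f2dot n x y = 0}"

lemma f2dot_add_left: "f2dot n (x + y) z = f2dot n x z + f2dot n y z"
  by (simp add: f2dot_def algebra_simps sum.distrib)

lemma f2dot_add_right: "f2dot n x (y + z) = f2dot n x y + f2dot n x z"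
  by (simp add: f2dot_def algebra_simps sum.distrib)

lemma f2dot_f2scale_left: "f2dot n (f2scale c x) y = c * f2dot n x y"
  by (simp add: f2dot_def f2scale_def sum_distrib_left mult.assoc)

lemma f2dot_commute: "f2dot n x y = f2dot n y x"
  by (simp add: f2dot_def mult.commute)

lemma f2dot_0_left [simp]: "f2dot n 0 y = 0" and f2dot_0_right [simp]: "f2dot n x 0 = 0"
  by (simp_all add: f2dot_def)

lemma f2perp_antimono: "S \<subseteq> S' \<Longrightarrow> f2perp n S' \<subseteq> f2perp n S"
  by (auto simp: f2perp_def)

definition x_part :: "nat \<Rightarrow> f2vec \<Rightarrow> f2vec" where
  "x_part n v = (\<lambda>i. if i < n then v i else 0)"

definition z_part :: "nat \<Rightarrow> f2vec \<Rightarrow> f2vec" where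
  "z_part n v = (\<lambda>i. if i < n then v (n + i) else 0)"

definition xz_join :: "nat \<Rightarrow> f2vec \<Rightarrow> f2vec \<Rightarrow> f2vec" where
  "xz_join n x z = (\<lambda>i. if i < n then x i else if i < 2 * n then z (i - n) else 0)"

lemma x_part_add: "x_part n (u + v) = x_part n u + x_part n v"
  and z_part_add: "z_part n (u + v) = z_part n u + z_part n v"
  and x_part_0 [simp]: "x_part n 0 = 0"
  and z_part_0 [simp]: "z_part n 0 = 0"
  by (auto simp: x_part_def z_part_def fun_eq_iff)

lemma x_part_mem_f2space: "x_part n v \<in> f2space n"
  and z_part_mem_f2space: "z_part n v \<in> f2space n"
  and xz_join_mem_f2space: "xz_join n x z \<in> f2space (2 * n)"
  by (auto simp: x_part_def z_part_def xz_join_def f2space_def)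

lemma x_part_xz_join [simp]: "x \<in> f2space n \<Longrightarrow> x_part n (xz_join n x z) = x"
  and z_part_xz_join [simp]: "z \<in> f2space n \<Longrightarrow> z_part n (xz_join n x z) = z"
  by (auto simp: x_part_def z_part_def xz_join_def fun_eq_iff f2space_def)

lemma xz_join_parts: "v \<in> f2space (2 * n) \<Longrightarrow> xz_join n (x_part n v) (z_part n v) = v"
  by (auto simp: x_part_def z_part_def xz_join_def fun_eq_iff f2space_def)

lemma symp_form_eq_f2dot:
  "symp_form n u v = f2dot n (x_part n u) (z_part n v) + f2dot n (z_part n u) (x_part n v)"
  by (simp add: symp_form_def f2dot_def x_part_def z_part_def)

lemma symp_weight_ge_x_part: "hamming_weight n (x_part n v) \<le> symp_weight n v"
  and symp_weight_ge_z_part: "hamming_weight n (z_part n v) \<le> symp_weight n v"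
  unfolding hamming_weight_def symp_weight_def
  by (auto intro!: card_mono simp: x_part_def z_part_def)

definition css_code :: "nat \<Rightarrow> f2vec set \<Rightarrow> f2vec set \<Rightarrow> f2vec set" where
  "css_code n A B = {v \<in> f2space (2 * n). x_part n v \<in> A \<and> z_part n v \<in> B}"

lemma css_code_subset_f2space: "css_code n A B \<subseteq> f2space (2 * n)"
  by (auto simp: css_code_def)

lemma css_code_mono: "A \<subseteq> A' \<Longrightarrow> B \<subseteq> B' \<Longrightarrow> css_code n A B \<subseteq> css_code n A' B'"
  by (auto simp: css_code_def)

lemma css_code_subspace:
  assumes "f2.subspace A" "f2.subspace B"
  shows "f2.subspace (css_code n A B)"
  using assms unfolding f2.subspace_def css_code_def
  by (auto simp: x_part_add z_part_add add_mem_f2space f2scale_eq_if)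

lemma symp_perp_css_code:
  assumes "A \<subseteq> f2space n" "B \<subseteq> f2space n" "0 \<in> A" "0 \<in> B"
  shows "symp_perp n (css_code n A B) = css_code n (f2perp n B) (f2perp n A)"
proof (intro equalityI subsetI)
  fix v assume v: "v \<in> symp_perp n (css_code n A B)"
  have "f2dot n z (x_part n v) = 0" if "z \<in> B" for z
  proof -
    have "z \<in> f2space n"
      using that assms(2) by blast
    moreover have "xz_join n 0 z \<in> css_code n A B"
      using that assms calculation by (simp add: css_code_def xz_join_mem_f2space)
    ultimately show ?thesis
      using v
      by (auto simp: symp_perp_def symp_form_eq_f2dot)
  qed
  moreover have "f2dot n x (z_part n v) = 0" if "x \<in> A" for x
  proof -
    have "x \<in> f2space n"
      using that assms(1) by blast
    moreover have "xz_join n x 0 \<in> css_code n A B"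
      using that assms calculation by (simp add: css_code_def xz_join_mem_f2space)
    ultimately show ?thesis
      using v
      by (auto simp: symp_perp_def symp_form_eq_f2dot)
  qed
  ultimately show "v \<in> css_code n (f2perp n B) (f2perp n A)"
    using v by (simp add: css_code_def f2perp_def symp_perp_def x_part_mem_f2space z_part_mem_f2space)
next
  fix v assume "v \<in> css_code n (f2perp n B) (f2perp n A)"
  then show "v \<in> symp_perp n (css_code n A B)"
    by (auto simp: css_code_def f2perp_def symp_perp_def symp_form_eq_f2dot f2dot_commute)
qed

lemma card_css_code:
  assumes "A \<subseteq> f2space n" "B \<subseteq> f2space n"
  shows "card (css_code n A B) = card A * card B"
proof -
  have "bij_betw (\<lambda>v. (x_part n v, z_part n v)) (css_code n A B) (A \<times> B)"
    by (rule bij_betw_byWitness[where f'="\<lambda>(x, z). xz_join n x z"])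
      (use assms in \<open>auto simp: css_code_def xz_join_parts xz_join_mem_f2space\<close>)
  then show ?thesis
    by (simp add: bij_betw_same_card card_cartesian_product)
qed

lemma stab_distance_css_code_ge:
  assumes "0 \<in> A" "0 \<in> B"
    and "\<not> css_code n A B \<subseteq> symp_perp n (css_code n A B)"
    and "\<And>x. x \<in> A \<Longrightarrow> x \<noteq> 0 \<Longrightarrow> d \<le> hamming_weight n x"
    and "\<And>z. z \<in> B \<Longrightarrow> z \<noteq> 0 \<Longrightarrow> d \<le> hamming_weight n z"
  shows "d \<le> stab_distance n (css_code n A B)"
  unfolding stab_distance_def
proof (rule cInf_greatest)
  show "symp_weight n ` (css_code n A B - symp_perp n (css_code n A B)) \<noteq> {}"
    using assms(3) by blast
next
  fix w assume "w \<in> symp_weight n ` (css_code n A B - symp_perp n (css_code n A B))"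
  then obtain v where v: "v \<in> css_code n A B" "v \<notin> symp_perp n (css_code n A B)"
    and w: "w = symp_weight n v"
    by blast
  have "v \<noteq> 0"
    using v(2) by (auto simp: symp_perp_def symp_form_eq_f2dot)
  moreover have "xz_join n 0 0 = 0"
    by (simp add: xz_join_def fun_eq_iff)
  ultimately have "x_part n v \<noteq> 0 \<or> z_part n v \<noteq> 0"
    using v(1) xz_join_parts[of v n] by (auto simp: css_code_def)
  then show "d \<le> w"
    using v(1) assms(4,5) symp_weight_ge_x_part symp_weight_ge_z_part
    unfolding w css_code_def by (fastforce intro: le_trans)
qed

lemma css_code_is_stabilizer_code:
  assumes "f2.subspace A" "f2.subspace B" "A \<subseteq> f2space n" "B \<subseteq> f2space n"
    and "f2perp n B \<subseteq> A" "f2perp n A \<subseteq> B"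
    and "n \<le> f2.dim (css_code n A B)"
  shows "is_stabilizer_code n (f2.dim (css_code n A B) - n) (css_code n A B)"
proof -
  have "symp_perp n (css_code n A B) \<subseteq> css_code n A B"
    using assms f2.subspace_0 by (simp add: symp_perp_css_code css_code_mono)
  with assms show ?thesis
    unfolding is_stabilizer_code_def by (simp add: css_code_subspace css_code_subset_f2space)
qed

definition f2unit :: "nat \<Rightarrow> f2vec" where
  "f2unit j = (\<lambda>i. if i = j then 1 else 0)"

lemma f2dot_f2unit_left: "i < n \<Longrightarrow> f2dot n (f2unit i) v = v i"
  by (simp add: f2dot_def f2unit_def if_distrib[where f="\<lambda>c. c * _"] cong: if_cong)

lemma f2dot_f2unit_right: "i < n \<Longrightarrow> f2dot n v (f2unit i) = v i"
  by (subst f2dot_commute) (rule f2dot_f2unit_left)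

lemma f2perp_subspace: "f2.subspace (f2perp n S)"
  unfolding f2.subspace_def f2perp_def
  by (auto simp: add_mem_f2space f2scale_eq_if f2dot_add_right)

definition generator_slot :: "nat \<Rightarrow> nat \<Rightarrow> nat \<Rightarrow> f2vec set" where
  "generator_slot n r j = (if j < r then f2vecs_on {r..<n} else f2space n)"

definition generator_space :: "nat \<Rightarrow> nat \<Rightarrow> nat \<Rightarrow> (nat \<Rightarrow> f2vec) set" where
  "generator_space n r a = PiE {..<a} (generator_slot n r)"

definition row_comb :: "nat \<Rightarrow> (nat \<Rightarrow> f2vec) \<Rightarrow> f2vec \<Rightarrow> f2vec" where
  "row_comb a g m = (\<lambda>i. \<Sum>j<a. m j * g j i)"

definition encode :: "nat \<Rightarrow> nat \<Rightarrow> (nat \<Rightarrow> f2vec) \<Rightarrow> f2vec \<Rightarrow> f2vec" where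
  "encode r a g m = f2restrict {..<r} m + row_comb a g m"

definition parity_checks :: "nat \<Rightarrow> nat \<Rightarrow> (nat \<Rightarrow> f2vec) \<Rightarrow> f2vec \<Rightarrow> f2vec" where
  "parity_checks n r g y = (\<lambda>k. if k < r then f2dot n (g k) y else 0)"

definition generated_code :: "nat \<Rightarrow> nat \<Rightarrow> (nat \<Rightarrow> f2vec) \<Rightarrow> f2vec set" where
  "generated_code r a g = encode r a g ` f2space a"

definition check_code :: "nat \<Rightarrow> nat \<Rightarrow> (nat \<Rightarrow> f2vec) \<Rightarrow> f2vec set" where
  "check_code n r g = f2perp n ((\<lambda>j. f2unit j + g j) ` {..<r})"

definition good_generator :: "nat \<Rightarrow> nat \<Rightarrow> nat \<Rightarrow> nat \<Rightarrow> (nat \<Rightarrow> f2vec) \<Rightarrow> bool" where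
  "good_generator n r a d g \<longleftrightarrow>
     (\<forall>m\<in>f2space a. m \<noteq> 0 \<longrightarrow> d \<le> hamming_weight n (encode r a g m)) \<and>
     (\<forall>z\<in>check_code n r g. z \<noteq> 0 \<longrightarrow> d \<le> hamming_weight n z)"

lemma row_comb_add: "row_comb a g (m + m') = row_comb a g m + row_comb a g m'"
  by (simp add: row_comb_def fun_eq_iff algebra_simps sum.distrib)

lemma encode_add: "encode r a g (m + m') = encode r a g m + encode r a g m'"
  by (simp add: encode_def row_comb_add f2restrict_def fun_eq_iff)

lemma encode_0 [simp]: "encode r a g 0 = 0"
  by (simp add: encode_def row_comb_def f2restrict_def fun_eq_iff)

lemma generated_code_subspace: "f2.subspace (generated_code r a g)"
  unfolding f2.subspace_def generated_code_def
proof (intro conjI ballI allI)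
  show "0 \<in> encode r a g ` f2space a"
    by (metis encode_0 zero_mem_f2space image_eqI)
  fix x y assume "x \<in> encode r a g ` f2space a" "y \<in> encode r a g ` f2space a"
  then show "x + y \<in> encode r a g ` f2space a"
    by (auto simp: encode_add[symmetric] intro!: imageI add_mem_f2space)
next
  fix c x assume "x \<in> encode r a g ` f2space a"
  then show "f2scale c x \<in> encode r a g ` f2space a"
    by (metis encode_0 zero_mem_f2space image_eqI f2scale_eq_if)
qed

lemma check_code_subspace: "f2.subspace (check_code n r g)"
  by (simp add: check_code_def f2perp_subspace)

lemma check_code_subset: "check_code n r g \<subseteq> f2space n"
  by (auto simp: check_code_def f2perp_def)

locale generator_dims =
  fixes n r a :: nat
  assumes r_le_a: "r \<le> a" and a_le_n: "a \<le> n"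

locale systematic_generator = generator_dims +
  fixes g :: "nat \<Rightarrow> f2vec"
  assumes g_mem: "g \<in> generator_space n r a"
begin

lemma g_mem_slot: "j < a \<Longrightarrow> g j \<in> generator_slot n r j"
  using g_mem by (auto simp: generator_space_def)

lemma g_low_zero: "j < r \<Longrightarrow> i < r \<Longrightarrow> g j i = 0"
  using g_mem_slot[of j] r_le_a by (auto simp: generator_slot_def f2vecs_on_def)

lemma g_high_zero: "j < a \<Longrightarrow> n \<le> i \<Longrightarrow> g j i = 0"
  using g_mem_slot[of j] by (auto simp: generator_slot_def f2vecs_on_def f2space_def split: if_splits)

lemma encode_mem_f2space: "encode r a g m \<in> f2space n"
  using r_le_a a_le_n g_high_zero by (auto simp: f2space_def encode_def row_comb_def f2restrict_def)

lemma generated_code_subset: "generated_code r a g \<subseteq> f2space n"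
  using encode_mem_f2space by (auto simp: generated_code_def)

lemma encode_f2unit: "j < r \<Longrightarrow> encode r a g (f2unit j) = f2unit j + g j"
  using r_le_a
  by (simp add: encode_def row_comb_def f2restrict_def f2unit_def fun_eq_iff
      if_distrib[where f="\<lambda>c. c * _"] cong: if_cong)

lemma f2perp_generated_code_subset: "f2perp n (generated_code r a g) \<subseteq> check_code n r g"
  unfolding check_code_def
proof (rule f2perp_antimono, safe)
  fix j assume "j < r"
  then have "f2unit j \<in> f2space a"
    using r_le_a by (auto simp: f2unit_def f2space_def)
  then show "f2unit j + g j \<in> generated_code r a g"
    using encode_f2unit[OF \<open>j < r\<close>] by (auto simp: generated_code_def intro!: image_eqI)
qed


lemma f2dot_g_f2restrict: "j < r \<Longrightarrow> f2dot n (g j) z = f2dot n (g j) (f2restrict {r..<n} z)"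
  unfolding f2dot_def f2restrict_def by (rule sum.cong) (auto simp: g_low_zero)

lemma f2dot_g_parity_checks: "j < r \<Longrightarrow> f2dot n (g j) (parity_checks n r g y) = 0"
  unfolding f2dot_def parity_checks_def by (rule sum.neutral) (auto simp: g_low_zero)

lemma mem_check_code_iff:
  "z \<in> check_code n r g \<longleftrightarrow> z \<in> f2space n \<and> (\<forall>j<r. z j = f2dot n (g j) z)"
proof -
  have "f2dot n (f2unit j + g j) z = 0 \<longleftrightarrow> z j = f2dot n (g j) z" if "j < r" for j
    using that r_le_a a_le_n
    by (simp add: f2dot_add_left f2dot_f2unit_left bit_add_eq_0_iff)
  then show ?thesis
    by (auto simp: check_code_def f2perp_def)
qed

lemma check_code_eq_image:
  "check_code n r g = (\<lambda>y. y + parity_checks n r g y) ` f2vecs_on {r..<n}"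
proof (intro equalityI subsetI)
  fix z assume z: "z \<in> check_code n r g"
  define y where "y = f2restrict {r..<n} z"
  have "z k = (y + parity_checks n r g y) k" for k
  proof (cases "k < r")
    case True
    then show ?thesis
      using z f2dot_g_f2restrict[OF True, of z]
      by (simp add: mem_check_code_iff y_def parity_checks_def f2restrict_def)
  next
    case False
    then show ?thesis
      using z by (auto simp: mem_check_code_iff y_def parity_checks_def f2restrict_def f2space_def)
  qed
  then have "z = y + parity_checks n r g y" ..
  then show "z \<in> (\<lambda>y. y + parity_checks n r g y) ` f2vecs_on {r..<n}"
    by (auto simp: y_def)
next
  fix z assume "z \<in> (\<lambda>y. y + parity_checks n r g y) ` f2vecs_on {r..<n}"
  then obtain y where y: "y \<in> f2vecs_on {r..<n}" and z: "z = y + parity_checks n r g y"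
    by blast
  have "z \<in> f2space n"
    using y a_le_n r_le_a by (auto simp: z parity_checks_def f2vecs_on_def f2space_def)
  moreover have "z j = f2dot n (g j) z" if "j < r" for j
  proof -
    have "y j = 0" "parity_checks n r g y j = f2dot n (g j) y"
      using that y by (simp_all add: f2vecs_on_def parity_checks_def)
    then show ?thesis
      using that by (simp add: z f2dot_add_right f2dot_g_parity_checks)
  qed
  ultimately show "z \<in> check_code n r g"
    by (simp add: mem_check_code_iff)
qed

lemma card_check_code: "card (check_code n r g) = 2 ^ (n - r)"
proof -
  have "inj_on (\<lambda>y. y + parity_checks n r g y) (f2vecs_on {r..<n})"
  proof (rule inj_on_inverseI)
    fix y assume "y \<in> f2vecs_on {r..<n}"
    then show "f2restrict {r..<n} (y + parity_checks n r g y) = y"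
      by (auto simp: f2restrict_def parity_checks_def f2vecs_on_def fun_eq_iff)
  qed
  then show ?thesis
    by (simp add: check_code_eq_image card_image card_f2vecs_on)
qed

lemma f2perp_check_code_eq_encode:
  assumes x: "x \<in> f2perp n (check_code n r g)"
  shows "x = encode r a g (f2restrict {..<r} x)"
proof
  fix i
  have "row_comb a g (f2restrict {..<r} x) i = (\<Sum>k<r. f2restrict {..<r} x k * g k i)"
    unfolding row_comb_def using r_le_a by (intro sum.mono_neutral_right) (auto simp: f2restrict_def)
  then have "row_comb a g (f2restrict {..<r} x) i = (\<Sum>k<r. x k * g k i)"
    by (simp add: f2restrict_def)
  then have encode: "encode r a g (f2restrict {..<r} x) i = f2restrict {..<r} x i + (\<Sum>k<r. x k * g k i)"
    by (simp add: encode_def f2restrict_id)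
  consider "i < r" | "r \<le> i" "i < n" | "n \<le> i"
    by linarith
  then show "x i = encode r a g (f2restrict {..<r} x) i"
  proof cases
    case 1
    then show ?thesis
      unfolding encode by (simp add: f2restrict_def g_low_zero)
  next
    case 2
    have parity: "parity_checks n r g (f2unit i) = (\<lambda>k. if k < r then g k i else 0)"
      using 2 by (simp add: parity_checks_def f2dot_f2unit_right cong: if_cong)
    have "f2unit i \<in> f2vecs_on {r..<n}"
      using 2 by (simp add: f2unit_def f2vecs_on_def)
    then have "f2unit i + parity_checks n r g (f2unit i) \<in> check_code n r g"
      by (auto simp: check_code_eq_image)
    then have "0 = f2dot n (f2unit i + parity_checks n r g (f2unit i)) x"
      using x by (auto simp: f2perp_def f2dot_commute)
    also have "\<dots> = x i + f2dot n (\<lambda>k. if k < r then g k i else 0) x"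
      using 2 by (simp add: parity f2dot_add_left f2dot_f2unit_left)
    also have "f2dot n (\<lambda>k. if k < r then g k i else 0) x = (\<Sum>k<n. if k < r then x k * g k i else 0)"
      by (auto simp: f2dot_def intro!: sum.cong)
    also have "(\<Sum>k<n. if k < r then x k * g k i else 0) = (\<Sum>k<r. x k * g k i)"
      using r_le_a a_le_n by (intro sum.mono_neutral_cong_right) auto
    finally have "x i = (\<Sum>k<r. x k * g k i)"
      by (simp add: eq_commute[of 0] bit_add_eq_0_iff)
    then show ?thesis
      using 2 unfolding encode by (simp add: f2restrict_def)
  next
    case 3
    then show ?thesis
      using x encode_mem_f2space by (auto simp: f2perp_def f2space_def)
  qed
qed


lemma f2perp_check_code_subset: "f2perp n (check_code n r g) \<subseteq> generated_code r a g"
proof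
  fix x assume x: "x \<in> f2perp n (check_code n r g)"
  have "f2restrict {..<r} x \<in> f2space a"
    using r_le_a by (auto simp: f2restrict_def f2space_def)
  then show "x \<in> generated_code r a g"
    unfolding generated_code_def using f2perp_check_code_eq_encode[OF x] by blast
qed

lemma good_generator_inj_encode:
  assumes "good_generator n r a d g" "1 \<le> d"
  shows "inj_on (encode r a g) (f2space a)"
proof (rule inj_onI)
  fix m m' assume m: "m \<in> f2space a" "m' \<in> f2space a" "encode r a g m = encode r a g m'"
  then have "encode r a g (m + m') = 0"
    by (simp add: encode_add)
  with assms m(1,2) have "m + m' = 0"
    by (force simp: good_generator_def add_mem_f2space)
  then show "m = m'"
    by (metis f2vec_add_cancel_left add_0_right)
qed

lemma dim_css_code_generator:
  assumes "inj_on (encode r a g) (f2space a)"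
  shows "f2.dim (css_code n (generated_code r a g) (check_code n r g)) = n + (a - r)"
proof -
  let ?C = "css_code n (generated_code r a g) (check_code n r g)"
  have "card ?C = 2 ^ (a + (n - r))"
    using assms generated_code_subset check_code_subset
    by (simp add: card_css_code generated_code_def card_image card_f2space card_check_code power_add)
  moreover have "card ?C = 2 ^ f2.dim ?C"
    by (intro f2_card_subspace css_code_subspace generated_code_subspace check_code_subspace
        finite_subset[OF css_code_subset_f2space finite_f2space])
  ultimately show ?thesis
    using r_le_a a_le_n by simp
qed

lemma encode_f2unit_notin_f2perp_check_code:
  assumes inj: "inj_on (encode r a g) (f2space a)" and "r < a"
  shows "encode r a g (f2unit r) \<notin> f2perp n (check_code n r g)"
proof
  define x where "x = encode r a g (f2unit r)"
  assume "x \<in> f2perp n (check_code n r g)"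
  then have "encode r a g (f2unit r) = encode r a g (f2restrict {..<r} x)"
    unfolding x_def by (rule f2perp_check_code_eq_encode)
  moreover have "f2unit r \<in> f2space a" "f2restrict {..<r} x \<in> f2space a"
    using \<open>r < a\<close> by (auto simp: f2unit_def f2restrict_def f2space_def)
  ultimately have "f2unit r = f2restrict {..<r} x"
    using inj by (auto dest: inj_onD)
  then show False
    by (metis f2unit_def f2restrict_def lessThan_iff less_irrefl zero_neq_one)
qed

lemma good_generator_code:
  assumes good: "good_generator n r a d g" and "1 \<le> d" "r < a"
  defines "C \<equiv> css_code n (generated_code r a g) (check_code n r g)"
  shows "is_stabilizer_code n (a - r) C" "d \<le> stab_distance n C"
proof -
  have inj: "inj_on (encode r a g) (f2space a)"
    using good_generator_inj_encode[OF good \<open>1 \<le> d\<close>] .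
  have subsets: "generated_code r a g \<subseteq> f2space n" "check_code n r g \<subseteq> f2space n"
    by (rule generated_code_subset, rule check_code_subset)
  show "is_stabilizer_code n (a - r) C"
    using css_code_is_stabilizer_code[OF generated_code_subspace check_code_subspace subsets
        f2perp_check_code_subset f2perp_generated_code_subset] dim_css_code_generator[OF inj]
    by (simp add: C_def)
  define x where "x = encode r a g (f2unit r)"
  have x_mem: "x \<in> generated_code r a g"
    using \<open>r < a\<close> by (auto simp: x_def generated_code_def f2unit_def f2space_def)
  have zeros: "0 \<in> generated_code r a g" "0 \<in> check_code n r g"
    using generated_code_subspace check_code_subspace by (auto intro: f2.subspace_0)
  have "xz_join n x 0 \<in> C - symp_perp n C"
    using x_mem zeros subsets encode_f2unit_notin_f2perp_check_code[OF inj \<open>r < a\<close>]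
    unfolding C_def symp_perp_css_code[OF subsets zeros] x_def
    by (auto simp: css_code_def xz_join_mem_f2space)
  then show "d \<le> stab_distance n C"
    unfolding C_def
  proof (intro stab_distance_css_code_ge zeros)
    fix y assume "y \<in> generated_code r a g" "y \<noteq> 0"
    then show "d \<le> hamming_weight n y"
      using good by (auto simp: generated_code_def good_generator_def)
  qed (use good in \<open>auto simp: good_generator_def\<close>)
qed

lemma row_comb_mem_f2space: "row_comb a g m \<in> f2space n"
  using a_le_n g_high_zero by (auto simp: f2space_def row_comb_def)

lemma row_comb_mem_high:
  assumes "m \<in> f2vecs_on {..<r}"
  shows "row_comb a g m \<in> f2vecs_on {r..<n}"
proof -
  have "m j * g j i = 0" if "i \<notin> {r..<n}" for i j
  proof (cases "j < r")
    case True
    then show ?thesis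
      using that r_le_a g_low_zero g_high_zero by (cases "i < r") auto
  next
    case False
    then show ?thesis
      using assms by (simp add: f2vecs_on_def)
  qed
  then show ?thesis
    by (auto simp: f2vecs_on_def row_comb_def intro!: sum.neutral)
qed

lemma not_good_generator_cases:
  assumes "\<not> good_generator n r a d g"
  obtains m where "m \<in> f2space a" "m \<noteq> 0" "hamming_weight n (encode r a g m) < d"
  | y where "y \<in> f2vecs_on {r..<n}" "y \<noteq> 0" "hamming_weight n (y + parity_checks n r g y) < d"
proof -
  have "parity_checks n r g 0 = 0"
    by (simp add: parity_checks_def fun_eq_iff)
  then show ?thesis
    using assms that unfolding good_generator_def check_code_eq_image
    by (metis (no_types, lifting) add_0 image_iff not_le)
qed

lemma bad_generator_cases:
  assumes "\<not> good_generator n r a d g"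
  obtains m where "m \<in> f2space a" "\<exists>j. r \<le> j \<and> j < a \<and> m j = 1"
      "hamming_weight n (encode r a g m) < d"
  | m where "m \<in> f2vecs_on {..<r}" "m \<noteq> 0" "hamming_weight n (m + row_comb a g m) < d"
  | y where "y \<in> f2vecs_on {r..<n}" "y \<noteq> 0" "hamming_weight n (y + parity_checks n r g y) < d"
  using assms
proof (cases rule: not_good_generator_cases)
  case (1 m)
  show thesis
  proof (cases "\<exists>j. r \<le> j \<and> j < a \<and> m j = 1")
    case False
    with 1 have "m \<in> f2vecs_on {..<r}"
      by (auto simp: f2space_def f2vecs_on_def not_less)
    with 1 show thesis
      using that(2) by (simp add: encode_def f2restrict_id)
  qed (use 1 that(1) in blast)
qed (use that(3) in blast)

end

lemma finite_generator_slot: "finite (generator_slot n r j)"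
  by (simp add: generator_slot_def finite_f2vecs_on finite_f2space)

lemma add_mem_generator_slot:
  "x \<in> generator_slot n r j \<Longrightarrow> y \<in> generator_slot n r j \<Longrightarrow> x + y \<in> generator_slot n r j"
  by (auto simp: generator_slot_def add_mem_f2vecs_on add_mem_f2space)

lemma finite_generator_space: "finite (generator_space n r a)"
  by (simp add: generator_space_def finite_PiE finite_generator_slot)

lemma zero_mem_generator_slot: "0 \<in> generator_slot n r j"
  by (simp add: generator_slot_def)

lemma generator_space_nonempty: "generator_space n r a \<noteq> {}"
  unfolding generator_space_def PiE_eq_empty_iff using zero_mem_generator_slot by blast

lemma generator_space_update:
  assumes "g \<in> generator_space n r a" "j < a" "t \<in> generator_slot n r j"
  shows "g(j := g j + t) \<in> generator_space n r a"
  using assms by (auto simp: generator_space_def PiE_iff add_mem_generator_slot extensional_def)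

lemma row_comb_update:
  assumes "j < a" "m j = 1"
  shows "row_comb a (g(j := g j + t)) m = row_comb a g m + t"
proof
  fix i
  have "row_comb a (g(j := g j + t)) m i = (\<Sum>k<a. m k * g k i + (if k = j then t i else 0))"
    unfolding row_comb_def using assms(2) by (intro sum.cong) (auto simp: algebra_simps)
  also have "\<dots> = row_comb a g m i + t i"
    using assms(1) by (simp add: sum.distrib row_comb_def)
  finally show "row_comb a (g(j := g j + t)) m i = (row_comb a g m + t) i"
    by simp
qed

lemma row_comb_equidistributed:
  assumes "j < a" "m j = 1"
    and row_comb_mem: "\<And>g. g \<in> generator_space n r a \<Longrightarrow> row_comb a g m \<in> generator_slot n r j"
  shows "card (generator_slot n r j) * card {g \<in> generator_space n r a. P (row_comb a g m)}
    = card (generator_space n r a) * card {t \<in> generator_slot n r j. P t}"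
proof (rule card_filter_shift_equivariant[where shift="\<lambda>t g. g(j := g j + t)"])
  fix t assume t: "t \<in> generator_slot n r j"
  show "bij_betw (\<lambda>g. g(j := g j + t)) (generator_space n r a) (generator_space n r a)"
    by (rule bij_betw_involution) (simp_all add: generator_space_update assms(1) t add.assoc)
  fix g assume "g \<in> generator_space n r a"
  show "row_comb a (g(j := g j + t)) m = row_comb a g m + t"
    using assms(1,2) by (rule row_comb_update)
qed (simp_all add: finite_generator_space finite_generator_slot add_mem_generator_slot row_comb_mem)

context generator_dims
begin

lemma systematic_generatorI: "g \<in> generator_space n r a \<Longrightarrow> systematic_generator n r a g"
  by (simp add: systematic_generator_def systematic_generator_axioms_def generator_dims_axioms)

lemma parity_checks_equidistributed:
  assumes i: "r \<le> i" "i < n" and "y i = 1"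
  shows "card (f2vecs_on {..<r}) * card {g \<in> generator_space n r a. P (parity_checks n r g y)}
    = card (generator_space n r a) * card {t \<in> f2vecs_on {..<r}. P t}"
proof -
  define shift :: "f2vec \<Rightarrow> (nat \<Rightarrow> f2vec) \<Rightarrow> nat \<Rightarrow> f2vec" where
    "shift t g = (\<lambda>j. if j < r then g j + f2scale (t j) (f2unit i) else g j)" for t g
  have shift_mem: "shift t g \<in> generator_space n r a" if g: "g \<in> generator_space n r a" for t g
  proof -
    have scale_mem: "f2scale c (f2unit i) \<in> f2vecs_on {r..<n}" for c
      using i by (auto simp: f2scale_def f2unit_def f2vecs_on_def)
    have g_slot: "g j \<in> generator_slot n r j" if "j < a" for j
      using that g by (auto simp: generator_space_def)
    have "shift t g j \<in> generator_slot n r j" if "j < a" for j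
      using g_slot[OF that] scale_mem[of "t j"]
      by (auto simp: shift_def generator_slot_def add_mem_f2vecs_on split: if_splits)
    moreover have "shift t g j = undefined" if "\<not> j < a" for j
      using that g r_le_a by (auto simp: shift_def generator_space_def PiE_iff extensional_def)
    ultimately show ?thesis
      by (auto simp: generator_space_def PiE_iff extensional_def)
  qed
  show ?thesis
  proof (rule card_filter_shift_equivariant[where shift=shift])
    fix t assume "t \<in> f2vecs_on {..<r}"
    show "bij_betw (shift t) (generator_space n r a) (generator_space n r a)"
      by (rule bij_betw_involution) (simp_all add: shift_mem, simp add: shift_def fun_eq_iff add.assoc)
    fix g
    show "parity_checks n r (shift t g) y = parity_checks n r g y + t"
    proof
      fix k
      show "parity_checks n r (shift t g) y k = (parity_checks n r g y + t) k"
        using \<open>t \<in> f2vecs_on {..<r}\<close> i \<open>y i = 1\<close>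
        by (cases "k < r") (simp_all add: parity_checks_def shift_def f2dot_add_left f2dot_f2scale_left
            f2dot_f2unit_left f2vecs_on_def)
    qed
  qed (simp_all add: finite_generator_space finite_f2vecs_on add_mem_f2vecs_on,
      simp add: parity_checks_def f2vecs_on_def)
qed

lemma card_bad_generators_high:
  "2 ^ n * card {g \<in> generator_space n r a. \<exists>m\<in>f2space a. (\<exists>j. r \<le> j \<and> j < a \<and> m j = 1) \<and>
      hamming_weight n (encode r a g m) < d}
    \<le> card (generator_space n r a) * (2 ^ a * hamming_ball_card n d)"
proof -
  define M where "M = {m \<in> f2space a. \<exists>j. r \<le> j \<and> j < a \<and> m j = 1}"
  have "2 ^ n * card {g \<in> generator_space n r a. hamming_weight n (encode r a g m) < d}
      \<le> card (generator_space n r a) * hamming_ball_card n d" if "m \<in> M" for m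
  proof -
    obtain j where j: "r \<le> j" "j < a" "m j = 1"
      using \<open>m \<in> M\<close> by (auto simp: M_def)
    then have slot: "generator_slot n r j = f2space n"
      by (simp add: generator_slot_def)
    have "card {t \<in> f2space n. hamming_weight n (f2restrict {..<r} m + t) < d} = hamming_ball_card n d"
      unfolding hamming_ball_card_def using r_le_a a_le_n
      by (intro card_filter_translate add_mem_f2space) (auto simp: f2restrict_def f2space_def)
    moreover have "card (generator_slot n r j) *
        card {g \<in> generator_space n r a. hamming_weight n (f2restrict {..<r} m + row_comb a g m) < d}
      = card (generator_space n r a) *
        card {t \<in> generator_slot n r j. hamming_weight n (f2restrict {..<r} m + t) < d}"
      using j systematic_generator.row_comb_mem_f2space[OF systematic_generatorI]
      by (intro row_comb_equidistributed) (simp_all add: slot)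
    ultimately show ?thesis
      by (simp add: slot card_f2space encode_def)
  qed
  then have "2 ^ n * card (\<Union>m\<in>M. {g \<in> generator_space n r a. hamming_weight n (encode r a g m) < d})
      \<le> card (generator_space n r a) * (\<Sum>m\<in>M. hamming_ball_card n d)"
    by (intro card_UN_le_weighted) (simp_all add: M_def finite_f2space)
  also have "\<dots> \<le> card (generator_space n r a) * (2 ^ a * hamming_ball_card n d)"
    using card_mono[OF finite_f2space, of M a] by (auto simp: M_def card_f2space)
  also have "(\<Union>m\<in>M. {g \<in> generator_space n r a. hamming_weight n (encode r a g m) < d})
      = {g \<in> generator_space n r a. \<exists>m\<in>f2space a. (\<exists>j. r \<le> j \<and> j < a \<and> m j = 1) \<and>
          hamming_weight n (encode r a g m) < d}"
    by (auto simp: M_def)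
  finally show ?thesis .
qed


lemma card_bad_generators_low:
  "2 ^ (n - r) * card {g \<in> generator_space n r a. \<exists>m\<in>f2vecs_on {..<r}. m \<noteq> 0 \<and>
      hamming_weight n (m + row_comb a g m) < d}
    \<le> card (generator_space n r a) * hamming_ball_card n d"
proof -
  let ?bad = "\<lambda>m. {g \<in> generator_space n r a. hamming_weight n (m + row_comb a g m) < d}"
  have "2 ^ (n - r) * card (?bad m)
      = card (generator_space n r a) * card {t \<in> f2vecs_on {r..<n}. hamming_weight n (m + t) < d}"
    if m: "m \<in> f2vecs_on {..<r} - {0}" for m
  proof -
    obtain j where j: "j < r" "m j = 1"
      using m by (auto elim: f2vecs_on_nonzeroE)
    then have slot: "generator_slot n r j = f2vecs_on {r..<n}"
      by (simp add: generator_slot_def)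
    have "card (generator_slot n r j) * card (?bad m)
      = card (generator_space n r a) * card {t \<in> generator_slot n r j. hamming_weight n (m + t) < d}"
      using j r_le_a m systematic_generator.row_comb_mem_high[OF systematic_generatorI]
      by (intro row_comb_equidistributed) (auto simp: slot)
    then show ?thesis
      using a_le_n r_le_a by (simp add: slot card_f2vecs_on)
  qed
  then have "2 ^ (n - r) * card (\<Union>m\<in>f2vecs_on {..<r} - {0}. ?bad m)
      \<le> card (generator_space n r a) *
        (\<Sum>m\<in>f2vecs_on {..<r} - {0}. card {t \<in> f2vecs_on {r..<n}. hamming_weight n (m + t) < d})"
    by (intro card_UN_le_weighted) (simp_all add: finite_f2vecs_on)
  also have "\<dots> \<le> card (generator_space n r a) * hamming_ball_card n d"
    using r_le_a a_le_n by (intro mult_left_mono sum_card_light_translates_le) (auto simp: ivl_disj_un)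
  also have "(\<Union>m\<in>f2vecs_on {..<r} - {0}. ?bad m) = {g \<in> generator_space n r a.
      \<exists>m\<in>f2vecs_on {..<r}. m \<noteq> 0 \<and> hamming_weight n (m + row_comb a g m) < d}"
    by auto
  finally show ?thesis .
qed

lemma card_bad_generators_checks:
  "2 ^ r * card {g \<in> generator_space n r a. \<exists>y\<in>f2vecs_on {r..<n}. y \<noteq> 0 \<and>
      hamming_weight n (y + parity_checks n r g y) < d}
    \<le> card (generator_space n r a) * hamming_ball_card n d"
proof -
  let ?bad = "\<lambda>y. {g \<in> generator_space n r a. hamming_weight n (y + parity_checks n r g y) < d}"
  have "2 ^ r * card (?bad y)
      = card (generator_space n r a) * card {t \<in> f2vecs_on {..<r}. hamming_weight n (y + t) < d}"
    if y: "y \<in> f2vecs_on {r..<n} - {0}" for y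
  proof -
    obtain i where "i \<in> {r..<n}" "y i = 1"
      using y by (blast elim: f2vecs_on_nonzeroE)
    then show ?thesis
      using parity_checks_equidistributed[of i y] by (simp add: card_f2vecs_on)
  qed
  then have "2 ^ r * card (\<Union>y\<in>f2vecs_on {r..<n} - {0}. ?bad y)
      \<le> card (generator_space n r a) *
        (\<Sum>y\<in>f2vecs_on {r..<n} - {0}. card {t \<in> f2vecs_on {..<r}. hamming_weight n (y + t) < d})"
    by (intro card_UN_le_weighted) (simp_all add: finite_f2vecs_on)
  also have "\<dots> \<le> card (generator_space n r a) * hamming_ball_card n d"
    using r_le_a a_le_n by (intro mult_left_mono sum_card_light_translates_le) (auto simp: ivl_disj_un)
  also have "(\<Union>y\<in>f2vecs_on {r..<n} - {0}. ?bad y) = {g \<in> generator_space n r a.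
      \<exists>y\<in>f2vecs_on {r..<n}. y \<noteq> 0 \<and> hamming_weight n (y + parity_checks n r g y) < d}"
    by auto
  finally show ?thesis .
qed

lemma exists_good_generator:
  assumes "3 * hamming_ball_card n d < 2 ^ r" "3 * hamming_ball_card n d < 2 ^ (n - r)"
    and "3 * (2 ^ a * hamming_ball_card n d) < 2 ^ n"
  shows "\<exists>g\<in>generator_space n r a. good_generator n r a d g"
proof (rule ccontr)
  assume no_good: "\<not> (\<exists>g\<in>generator_space n r a. good_generator n r a d g)"
  define B1 where "B1 = {g \<in> generator_space n r a. \<exists>m\<in>f2space a. (\<exists>j. r \<le> j \<and> j < a \<and> m j = 1) \<and>
      hamming_weight n (encode r a g m) < d}"
  define B2 where "B2 = {g \<in> generator_space n r a. \<exists>m\<in>f2vecs_on {..<r}. m \<noteq> 0 \<and>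
      hamming_weight n (m + row_comb a g m) < d}"
  define B3 where "B3 = {g \<in> generator_space n r a. \<exists>y\<in>f2vecs_on {r..<n}. y \<noteq> 0 \<and>
      hamming_weight n (y + parity_checks n r g y) < d}"
  have "generator_space n r a \<subseteq> B1 \<union> B2 \<union> B3"
  proof
    fix g assume g: "g \<in> generator_space n r a"
    then have "\<not> good_generator n r a d g"
      using no_good by blast
    then show "g \<in> B1 \<union> B2 \<union> B3"
      by (rule systematic_generator.bad_generator_cases[OF systematic_generatorI[OF g]])
        (use g in \<open>auto simp: B1_def B2_def B3_def\<close>)
  qed
  then have "card (generator_space n r a) \<le> card (B1 \<union> B2 \<union> B3)"
    by (rule card_mono[rotated]) (auto simp: B1_def B2_def B3_def finite_generator_space)
  also have "\<dots> \<le> card B1 + card B2 + card B3"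
    by (meson card_Un_le le_trans add_le_mono1)
  moreover have "0 < card (generator_space n r a)"
    using finite_generator_space generator_space_nonempty by (simp add: card_gt_0_iff)
  then have "3 * card B1 < card (generator_space n r a)" "3 * card B2 < card (generator_space n r a)"
    "3 * card B3 < card (generator_space n r a)"
    using less_of_mult_le[OF card_bad_generators_high assms(3)]
      less_of_mult_le[OF card_bad_generators_low assms(2)]
      less_of_mult_le[OF card_bad_generators_checks assms(1)]
    by (simp_all add: B1_def B2_def B3_def)
  ultimately show False
    by linarith
qed

end

lemma exists_good_stabilizer_code:
  assumes "1 \<le> d" "2 * l < n" "3 * hamming_ball_card n d < 2 ^ l"
  shows "\<exists>k C. is_stabilizer_code n k C \<and> d \<le> stab_distance n C \<and> n - 2 * l \<le> k"
proof -
  interpret generator_dims n l "n - l"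
    using assms(2) by unfold_locales auto
  have "(2::nat) ^ l \<le> 2 ^ (n - l)"
    using assms(2) by (intro power_increasing) auto
  then have "3 * hamming_ball_card n d < 2 ^ (n - l)"
    using assms(3) by linarith
  moreover have "3 * (2 ^ (n - l) * hamming_ball_card n d) < 2 ^ (n - l) * 2 ^ l"
    using assms(3) by simp
  then have "3 * (2 ^ (n - l) * hamming_ball_card n d) < 2 ^ n"
    using assms(2) by (simp add: power_add[symmetric])
  ultimately obtain g where g: "g \<in> generator_space n l (n - l)" "good_generator n l (n - l) d g"
    using exists_good_generator[OF assms(3)] by blast
  interpret systematic_generator n l "n - l" g
    using g(1) by (rule systematic_generatorI)
  have "l < n - l"
    using assms(2) by simp
  then have "is_stabilizer_code n (n - l - l) (css_code n (generated_code l (n - l) g) (check_code n l g))"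
    "d \<le> stab_distance n (css_code n (generated_code l (n - l) g) (check_code n l g))"
    using good_generator_code[OF g(2) assms(1)] by simp_all
  moreover have "n - l - l = n - 2 * l"
    by simp
  ultimately show ?thesis
    by (metis order_refl)
qed

lemma mult_one_minus_ln_le:
  fixes t x :: real
  assumes "0 < t" "0 < x"
  shows "t * (1 - ln t) \<le> t * ln x + 1 / x"
proof -
  define s where "s = t * x"
  have s: "0 < s"
    using assms by (simp add: s_def)
  have "ln (1 / s) \<le> 1 / s - 1"
    using s by (intro ln_le_minus_one) simp
  then have "s * (1 - ln s) \<le> 1"
    using s by (simp add: ln_div field_simps)
  moreover have "t * (1 - ln t) = s * (1 - ln s) / x + t * ln x"
    using assms by (simp add: s_def ln_mult field_simps)
  ultimately show ?thesis
    using assms by (simp add: divide_right_mono)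
qed

lemma hamming_ball_card_ceiling_le:
  fixes \<delta> :: real
  assumes "0 < \<delta>" "\<delta> \<le> 1" "1 \<le> n"
  shows "real (hamming_ball_card n (nat \<lceil>\<delta> * n\<rceil>)) \<le> exp ((\<delta> * n + 1) * (1 - ln \<delta>))"
proof -
  define d where "d = nat \<lceil>\<delta> * n\<rceil>"
  have d: "\<delta> * n \<le> d" "d \<le> \<delta> * n + 1"
    using assms by (simp_all add: d_def)
  have "0 < \<delta> * n"
    using assms by simp
  then have "1 \<le> d"
    using d(1) by linarith
  moreover have "d \<le> n"
    using assms by (simp add: d_def mult_le_cancel_right1)
  ultimately have "real (hamming_ball_card n d) \<le> exp d * (n / d) ^ d"
    by (rule hamming_ball_card_le)
  also have "\<dots> \<le> exp d * (1 / \<delta>) ^ d"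
    using assms d \<open>1 \<le> d\<close> by (intro mult_left_mono power_mono) (simp_all add: field_simps)
  also have "\<dots> = exp d / exp (d * ln \<delta>)"
    using assms by (simp add: exp_of_nat_mult power_one_over divide_inverse power_inverse)
  also have "\<dots> = exp (d * (1 - ln \<delta>))"
    by (simp add: exp_diff algebra_simps)
  also have "\<dots> \<le> exp ((\<delta> * n + 1) * (1 - ln \<delta>))"
    using assms d ln_le_minus_one[of \<delta>] by (intro exp_mono mult_right_mono) simp_all
  finally show ?thesis
    by (simp add: d_def)
qed

lemma three_hamming_ball_card_less:
  fixes \<delta> \<theta> :: real
  assumes "0 < \<delta>" "\<delta> \<le> 1" "1 \<le> n"
    and "ln 3 + (\<delta> * n + 1) * (1 - ln \<delta>) < \<theta> * n * ln 2"
  shows "3 * hamming_ball_card n (nat \<lceil>\<delta> * n\<rceil>) < 2 ^ nat \<lceil>\<theta> * n\<rceil>"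
proof -
  have "3 * real (hamming_ball_card n (nat \<lceil>\<delta> * n\<rceil>)) \<le> exp (ln 3 + (\<delta> * n + 1) * (1 - ln \<delta>))"
    using hamming_ball_card_ceiling_le[OF assms(1-3)] by (simp add: exp_add)
  also have "\<dots> < exp (\<theta> * n * ln 2)"
    using assms(4) by simp
  also have "\<dots> \<le> exp (nat \<lceil>\<theta> * n\<rceil> * ln 2)"
    using real_nat_ceiling_ge[of "\<theta> * n"] by simp
  also have "\<dots> = 2 ^ nat \<lceil>\<theta> * n\<rceil>"
    by (simp add: exp_of_nat_mult)
  finally show ?thesis
    by (metis of_nat_less_iff of_nat_mult of_nat_numeral of_nat_power)
qed

lemma exists_stabilizer_code_rate_distance:
  fixes \<delta> \<theta> \<rho> :: real
  assumes \<delta>: "0 < \<delta>" "\<delta> \<le> 1" and "0 \<le> \<rho>" and "1 \<le> n"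
    and volume: "ln 3 + (1 - ln \<delta>) < (\<theta> * ln 2 - \<delta> * (1 - ln \<delta>)) * n"
    and rate: "2 < (1 - 2 * \<theta> - \<rho>) * n"
  shows "\<exists>k C. is_stabilizer_code n k C \<and> \<delta> * n \<le> stab_distance n C \<and> \<rho> * n \<le> k"
proof -
  define d where "d = nat \<lceil>\<delta> * n\<rceil>"
  define l where "l = nat \<lceil>\<theta> * n\<rceil>"
  have K: "1 \<le> 1 - ln \<delta>"
    using \<delta> by simp
  have "0 < ln 3 + (1 - ln \<delta>)"
    using K ln_gt_zero[of 3] by linarith
  then have "0 < (\<theta> * ln 2 - \<delta> * (1 - ln \<delta>)) * n"
    using volume by linarith
  then have "0 < \<theta> * ln 2 - \<delta> * (1 - ln \<delta>)"
    by (simp add: zero_less_mult_iff)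
  moreover have "0 < \<delta> * (1 - ln \<delta>)"
    using \<delta>(1) K by (intro mult_pos_pos) linarith+
  ultimately have "0 < \<theta> * ln 2"
    by linarith
  then have "0 < \<theta>"
    by (simp add: zero_less_mult_iff)
  then have l: "\<theta> * n \<le> l" "l \<le> \<theta> * n + 1"
    by (simp_all add: l_def)
  have "0 < \<delta> * n"
    using \<delta> \<open>1 \<le> n\<close> by simp
  moreover have "\<delta> * n \<le> d"
    using \<open>0 < \<delta> * n\<close> by (simp add: d_def)
  ultimately have d: "\<delta> * n \<le> d" "1 \<le> d"
    by linarith+
  have "3 * hamming_ball_card n d < 2 ^ l"
    unfolding d_def l_def using \<delta> \<open>1 \<le> n\<close> volume
    by (intro three_hamming_ball_card_less) (simp_all add: algebra_simps)
  moreover have "2 * real l + \<rho> * n < n"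
    using l rate by (simp add: algebra_simps)
  moreover have "real (2 * l) < real n"
    using calculation(2) \<open>0 \<le> \<rho>\<close> by simp (meson add_less_same_cancel1 mult_nonneg_nonneg not_less of_nat_0_le_iff order_trans)
  then have "2 * l < n"
    by (simp only: of_nat_less_iff)
  ultimately obtain k C where "is_stabilizer_code n k C" "d \<le> stab_distance n C" "n - 2 * l \<le> k"
    using exists_good_stabilizer_code[OF d(2)] by blast
  moreover have "\<rho> * n \<le> real (n - 2 * l)"
    using \<open>2 * l < n\<close> \<open>2 * real l + \<rho> * n < n\<close> by (simp add: of_nat_diff)
  ultimately show ?thesis
    using d(1) by (meson order_trans of_nat_le_iff)
qed

lemma eventually_less_mult_real:
  fixes b c :: real
  assumes "0 < c"
  shows "\<forall>\<^sub>F n in sequentially. b < c * real n"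
proof -
  obtain N :: nat where "b / c < N"
    using reals_Archimedean2 by blast
  then have "b < c * real n" if "N \<le> n" for n
    using assms that by (simp add: pos_divide_less_eq mult.commute)
      (meson less_le_trans mult_left_mono of_nat_le_iff less_imp_le)
  then show ?thesis
    by (auto simp: eventually_sequentially)
qed

lemma eventually_exists_stabilizer_code:
  fixes \<delta> \<theta> \<rho> :: real
  assumes "0 < \<delta>" "\<delta> \<le> 1" "\<delta> * (1 - ln \<delta>) < \<theta> * ln 2" "0 \<le> \<rho>" "\<rho> < 1 - 2 * \<theta>"
  shows "\<forall>\<^sub>F n in sequentially.
    \<exists>k C. is_stabilizer_code n k C \<and> \<delta> * n \<le> stab_distance n C \<and> \<rho> * n \<le> k"
proof -
  have "\<forall>\<^sub>F n in sequentially. 1 \<le> n \<and>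
      ln 3 + (1 - ln \<delta>) < (\<theta> * ln 2 - \<delta> * (1 - ln \<delta>)) * n \<and> 2 < (1 - 2 * \<theta> - \<rho>) * n"
    using assms by (intro eventually_conj eventually_ge_at_top eventually_less_mult_real) simp_all
  then show ?thesis
    by (rule eventually_mono) (use assms exists_stabilizer_code_rate_distance in blast)
qed

lemma inverse_square_less_ln2_div:
  fixes x :: real
  assumes "4 \<le> x"
  shows "1 / (x * x) < ln 2 / (x - 1)"
proof -
  have "4 * x \<le> x * x"
    using assms by (intro mult_right_mono) simp_all
  moreover have "2 / 3 * (x * x) \<le> ln 2 * (x * x)"
    using ln2_ge_two_thirds by (intro mult_right_mono) simp_all
  ultimately have "x - 1 < ln 2 * (x * x)"
    using assms by linarith
  then show ?thesis
    using assms by (simp add: field_simps)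
qed

lemma entropy_shift_bound:
  fixes m :: nat and \<delta> :: real
  assumes "2 \<le> m" "0 \<le> \<delta>"
  obtains \<delta>' where "\<delta> < \<delta>'" "\<delta>' \<le> \<delta> + 1 / (4 * real m)"
    "\<delta>' * (1 - ln \<delta>') < (2 * m * \<delta> + 1 / (2 ^ m - 1)) * ln 2"
proof -
  define x :: real where "x = 2 ^ m"
  have x: "4 \<le> x"
    using power_increasing[OF assms(1), of "2::real"] by (simp add: x_def)
  have m: "0 < real m"
    using assms(1) by simp
  define gap where "gap = ln 2 / (x - 1) - 1 / (x * x)"
  (* the shift by epsilon > 0 makes the entropy estimate usable even for delta = 0;
     the gap absorbs its cost *)
  define \<epsilon> where "\<epsilon> = gap / (4 * m * ln 2)"
  have gap: "0 < gap"
    using inverse_square_less_ln2_div[OF x] by (simp add: gap_def)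
  have \<epsilon>: "0 < \<epsilon>" "2 * m * ln 2 * \<epsilon> = gap / 2"
    using gap m by (simp_all add: \<epsilon>_def)
  have "ln 2 / (x - 1) \<le> ln 2 / 1"
    using x by (intro divide_left_mono) simp_all
  moreover have "0 \<le> 1 / (x * x)"
    by simp
  ultimately have "gap \<le> ln 2"
    unfolding gap_def by linarith
  then have "\<epsilon> \<le> 1 / (4 * real m)"
    using m by (simp add: \<epsilon>_def field_simps)
  have "(\<delta> + \<epsilon>) * (1 - ln (\<delta> + \<epsilon>)) \<le> (\<delta> + \<epsilon>) * ln (x * x) + 1 / (x * x)"
    using assms(2) \<epsilon>(1) x by (intro mult_one_minus_ln_le) simp_all
  also have "\<dots> = 2 * m * ln 2 * \<delta> + 2 * m * ln 2 * \<epsilon> + 1 / (x * x)"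
    by (simp add: x_def ln_mult ln_realpow algebra_simps)
  also have "\<dots> < (2 * m * \<delta> + 1 / (x - 1)) * ln 2"
    using \<epsilon>(2) gap by (simp add: gap_def algebra_simps)
  finally show thesis
    using \<epsilon>(1) \<open>\<epsilon> \<le> 1 / (4 * real m)\<close> by (intro that[of "\<delta> + \<epsilon>"]) (simp_all add: x_def)
qed

lemma gv_parameters:
  fixes m :: nat and \<delta> :: real
  assumes "2 \<le> m" "0 \<le> \<delta>" "\<delta> \<le> 1 / (4 * real m) * (1 - 2 / (2 ^ m - 1))"
  defines "R \<equiv> 1 - 2 / (2 ^ m - 1) - 4 * real m * \<delta>"
  obtains \<delta>' \<theta> where "\<delta> \<le> \<delta>'" "0 < \<delta>'" "\<delta>' \<le> 1" "\<delta>' * (1 - ln \<delta>') < \<theta> * ln 2"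
    "0 \<le> R" "R < 1 - 2 * \<theta>"
proof -
  obtain \<delta>' where \<delta>': "\<delta> < \<delta>'" "\<delta>' \<le> \<delta> + 1 / (4 * real m)"
    "\<delta>' * (1 - ln \<delta>') < (2 * m * \<delta> + 1 / (2 ^ m - 1)) * ln 2"
    using entropy_shift_bound[OF assms(1,2)] .
  have "0 \<le> 2 / ((2::real) ^ m - 1)"
    using one_le_power[of "2::real" m] by simp
  moreover have R: "4 * m * \<delta> \<le> 1 - 2 / (2 ^ m - 1)" and "1 / (4 * real m) \<le> 1 / 8"
    using assms(1,3) by (simp_all add: field_simps)
  moreover have "8 * \<delta> \<le> 4 * m * \<delta>"
    using assms(1,2) by (intro mult_right_mono) simp_all
  ultimately have "\<delta>' \<le> 1"
    using \<delta>'(2) by linarith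
  have "\<delta>' * (1 - ln \<delta>') / ln 2 < 2 * m * \<delta> + 1 / (2 ^ m - 1)"
    using \<delta>'(3) by (simp add: pos_divide_less_eq)
  then obtain \<theta> where \<theta>: "\<delta>' * (1 - ln \<delta>') / ln 2 < \<theta>" "\<theta> < 2 * m * \<delta> + 1 / (2 ^ m - 1)"
    using dense by blast
  show thesis
  proof (rule that)
    show "\<delta>' * (1 - ln \<delta>') < \<theta> * ln 2"
      using \<theta>(1) by (simp add: pos_divide_less_eq)
    show "0 \<le> R" "R < 1 - 2 * \<theta>"
      using R \<theta>(2) by (simp_all add: R_def)
    show "\<delta> \<le> \<delta>'" "0 < \<delta>'"
      using \<delta>'(1) assms(2) by simp_all
  qed fact
qed

lemma ereal_le_liminf_divide:
  fixes a b :: "nat \<Rightarrow> real"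
  assumes "\<And>i. 0 < b i" "\<And>i. c * b i \<le> a i"
  shows "ereal c \<le> liminf (\<lambda>i. ereal (a i / b i))"
  using assms by (intro Liminf_bounded always_eventually allI) (simp add: pos_le_divide_eq)

lemma eventually_stabilizer_code_relative_distance:
  fixes m :: nat and \<delta> :: real
  assumes "2 \<le> m" "0 \<le> \<delta>" "\<delta> \<le> 1 / (4 * real m) * (1 - 2 / (2 ^ m - 1))"
  defines "R \<equiv> 1 - 2 / (2 ^ m - 1) - 4 * real m * \<delta>"
  shows "\<forall>\<^sub>F n in sequentially. 0 < n \<and>
    (\<exists>k C. is_stabilizer_code n k C \<and> \<delta> * n \<le> stab_distance n C \<and> R * n \<le> k)"
proof -
  obtain \<delta>' \<theta> where \<delta>': "\<delta> \<le> \<delta>'" "0 < \<delta>'" "\<delta>' \<le> 1" "\<delta>' * (1 - ln \<delta>') < \<theta> * ln 2"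
    and R: "0 \<le> R" "R < 1 - 2 * \<theta>"
    using gv_parameters[OF assms(1-3)] unfolding R_def by blast
  have le: "\<delta> * n \<le> \<delta>' * n" for n :: nat
    using \<delta>'(1) by (simp add: mult_right_mono)
  show ?thesis
    using eventually_exists_stabilizer_code[OF \<delta>'(2-4) R] eventually_gt_at_top[of 0]
    by eventually_elim (use le in \<open>meson order_trans\<close>)
qed

theorem proposition4:
  fixes m :: nat and \<delta> :: real
  assumes "m \<ge> 2" and "0 \<le> \<delta>"
    and "\<delta> \<le> 1 / (4 * real m) * (1 - 2 / (2 ^ m - 1))"
  shows "\<exists>(n :: nat \<Rightarrow> nat) (k :: nat \<Rightarrow> nat) (d :: nat \<Rightarrow> nat) (C :: nat \<Rightarrow> f2vec set).
           (\<forall>i. is_stabilizer_code_nkd (n i) (k i) (d i) (C i)) \<and>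
           filterlim n at_top sequentially \<and>
           liminf (\<lambda>i. ereal (real (k i) / real (n i)))
             \<ge> ereal (1 - 2 / (2 ^ m - 1) - 4 * real m * \<delta>) \<and>
           liminf (\<lambda>i. ereal (real (d i) / real (n i))) \<ge> ereal \<delta>"
proof -
  obtain N where "\<forall>n\<ge>N. 0 < n \<and> (\<exists>k C. is_stabilizer_code n k C \<and>
      \<delta> * n \<le> stab_distance n C \<and> (1 - 2 / (2 ^ m - 1) - 4 * real m * \<delta>) * n \<le> k)"
    using eventually_stabilizer_code_relative_distance[OF assms] unfolding eventually_sequentially ..
  then have "\<forall>i. \<exists>k C. 0 < i + N \<and> is_stabilizer_code (i + N) k C \<and>
      \<delta> * (i + N) \<le> stab_distance (i + N) C \<and> (1 - 2 / (2 ^ m - 1) - 4 * real m * \<delta>) * (i + N) \<le> k"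
    by (metis le_add2)
  then obtain k C where code: "\<And>i. 0 < i + N" "\<And>i. is_stabilizer_code (i + N) (k i) (C i)"
    "\<And>i. \<delta> * (i + N) \<le> stab_distance (i + N) (C i)"
    "\<And>i. (1 - 2 / (2 ^ m - 1) - 4 * real m * \<delta>) * (i + N) \<le> k i"
    by metis
  have pos: "0 < real (i + N)" for i
    using code(1)[of i] by (simp only: of_nat_0_less_iff)
  show ?thesis
    using code(2) filterlim_add_const_nat_at_top[of N]
      ereal_le_liminf_divide[OF pos code(3)] ereal_le_liminf_divide[OF pos code(4)]
    unfolding is_stabilizer_code_nkd_def
    by (intro exI[of _ "\<lambda>i. i + N"] exI[of _ k] exI[of _ "\<lambda>i. stab_distance (i + N) (C i)"] exI[of _ C])
      simp
qed

end
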